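(* Realize $\mathrm{SO}(3)\times\mathbb{R}$ as the group of $4\times4$ matrices $(C,v)=\begin{pmatrix}C&0\\0&e^v\end{pmatrix}$, $C\in\mathrm{SO}(3)$, $v\in\mathbb{R}$, and let $E_1=e_{32}-e_{23}$, $E_2=e_{13}-e_{31}$, $E_3=e_{21}-e_{12}$, $E_4=e_{44}$ ($e_{jk}$ the $4\times4$ matrix units), $e_1=E_1$, $e_2=E_4-E_3$, $e_3=E_2$, $e_4=E_3$. For $\alpha_1^2+\alpha_2^2+\alpha_3^2=1$, $\beta\in\mathbb{R}$ let $$\gamma_1(t)=\gamma_1(\alpha_1,\alpha_2,\alpha_3,\beta;t)=\exp\bigl(t(\alpha_1e_1+\alpha_2e_2+\alpha_3e_3+\beta e_4)\bigr)\exp(-t\beta e_4)$$ (the arclength geodesics through $\mathrm{Id}$ of the left-invariant sub-Riemannian metric $\rho_1$ defined by $\mathrm{span}(e_1,e_2,e_3)$ with orthonormal basis $e_1,e_2,e_3$). Put $w_1=\sqrt{1-\alpha_2^2+(\beta-\alpha_2)^2}$, $\mu_1=\frac{\sin w_1t}{w_1}$, $\nu_1=\frac{1-\cos w_1t}{w_1^2}$, and $\delta=\beta-\alpha_2$. If $\alpha_2\neq\pm1$, then $\gamma_1(t)=(C,v)(t)$ with $v(t)=\alpha_2t$ and the columns of $C(t)\in\mathrm{SO}(3)$ given by $$C_1=\begin{pmatrix}(1-\nu_1(\alpha_3^2+\delta^2))\cos\beta t-(\alpha_1\alpha_3\nu_1-\delta\mu_1)\sin\beta t\\ (\alpha_1\alpha_3\nu_1+\delta\mu_1)\cos\beta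 t-(1-\nu_1(\alpha_1^2+\delta^2))\sin\beta t\\ (\alpha_1\delta\nu_1-\alpha_3\mu_1)\cos\beta t-(\alpha_3\delta\nu_1+\alpha_1\mu_1)\sin\beta t\end{pmatrix},$$ $$C_2=\begin{pmatrix}(1-\nu_1(\alpha_3^2+\delta^2))\sin\beta t+(\alpha_1\alpha_3\nu_1-\delta\mu_1)\cos\beta t\\ (\alpha_1\alpha_3\nu_1+\delta\mu_1)\sin\beta t+(1-\nu_1(\alpha_1^2+\delta^2))\cos\beta t\\ (\alpha_1\delta\nu_1-\alpha_3\mu_1)\sin\beta t+(\alpha_3\delta\nu_1+\alpha_1\mu_1)\cos\beta t\end{pmatrix},\quad C_3=\begin{pmatrix}\alpha_1\delta\nu_1+\alpha_3\mu_1\\ \alpha_3\delta\nu_1-\alpha_1\mu_1\\ 1-\nu_1(\alpha_1^2+\alpha_3^2)\end{pmatrix}.$$ If $\alpha_2=\pm1$, then $\gamma_1(t)=(C,v)(t)$ with $v(t)=\alpha_2t$ and $C(t)=\begin{pmatrix}\cos\alpha_2t&\sin\alpha_2t&0\\-\sin\alpha_2t&\cos\alpha_2t&0\\0&0&1\end{pmatrix}$.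
   Context: The matrices $E_1,\dots,E_4$ satisfy $[E_1,E_2]=E_3$, $[E_2,E_3]=E_1$, $[E_3,E_1]=E_2$, $[E_i,E_4]=0$. *)

theory Defs
  imports "HOL-Analysis.Analysis"
begin

text \<open>Matrix powers and the matrix exponential for square real matrices
  (the built-in exp on real^n^n would be componentwise, so we define it).\<close>

primrec matpow :: "real^'n^'n \<Rightarrow> nat \<Rightarrow> real^'n^'n" where
  "matpow A 0 = mat 1"
| "matpow A (Suc k) = A ** matpow A k"

definition mexp :: "real^'n^'n \<Rightarrow> real^'n^'n" where
  "mexp A = (\<Sum>k. (1 / fact k) *\<^sub>R matpow A k)"

definition munit :: "4 \<Rightarrow> 4 \<Rightarrow> real^4^4" where
  "munit j k = (\<chi> a b. if a = j \<and> b = k then 1 else 0)"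

definition E1 :: "real^4^4" where "E1 = munit 3 2 - munit 2 3"
definition E2 :: "real^4^4" where "E2 = munit 1 3 - munit 3 1"
definition E3 :: "real^4^4" where "E3 = munit 2 1 - munit 1 2"
definition E4 :: "real^4^4" where "E4 = munit 4 4"

definition e1 :: "real^4^4" where "e1 = E1"
definition e2 :: "real^4^4" where "e2 = E4 - E3"
definition e3 :: "real^4^4" where "e3 = E2"
definition e4 :: "real^4^4" where "e4 = E3"

definition gamma1 :: "real \<Rightarrow> real \<Rightarrow> real \<Rightarrow> real \<Rightarrow> real \<Rightarrow> real^4^4" where
  "gamma1 a1 a2 a3 b t =
     mexp (t *\<^sub>R (a1 *\<^sub>R e1 + a2 *\<^sub>R e2 + a3 *\<^sub>R e3 + b *\<^sub>R e4)) ** mexp ((- t * b) *\<^sub>R e4)"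

text \<open>Index map from {1,2,3} in type 4 to type 3 (only used on those indices).\<close>

definition ix3 :: "4 \<Rightarrow> 3" where
  "ix3 i = (if i = 1 then 1 else if i = 2 then 2 else 3)"

definition pairCv :: "real^3^3 \<Rightarrow> real \<Rightarrow> real^4^4" where
  "pairCv C v = (\<chi> i j. if i = 4 \<and> j = 4 then exp v
                        else if i = 4 \<or> j = 4 then 0
                        else C $ ix3 i $ ix3 j)"

definition cols3 :: "real^3 \<Rightarrow> real^3 \<Rightarrow> real^3 \<Rightarrow> real^3^3" where
  "cols3 c1 c2 c3 = transpose (vector [c1, c2, c3])"

end

theory Submission
  imports Defs
begin

(* Write the generator as t X + a2 t E4 with X = a1 E1 + a3 E2 + (b - a2) E3.  E4 is idempotent and
   annihilates X, and X^3 = -w^2 X with w^2 = a1^2 + a3^2 + (b - a2)^2 (= w1^2 by the normalisation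
   of alpha), so the exponential series collapses to Rodrigues' formula
   diag(I + (sin wt / w) K + ((1 - cos wt) / w^2) K^2, e^(a2 t)), K the cross-product matrix of
   (a1, a3, b - a2).  The second factor exp(-t b e4) is the rotation by -bt about the third axis,
   so C is a product of two rotations.  For a2 = +-1 the normalisation forces a1 = a3 = 0 and both
   factors are rotations about the third axis. *)

lemma matrix_add_rdistrib:
  fixes A B :: "'a::semiring_1^'n^'m" and C :: "'a^'p^'n"
  shows "(A + B) ** C = A ** C + B ** C"
  by (simp add: matrix_matrix_mult_def vec_eq_iff sum.distrib distrib_right)

lemma matrix_mult_scaleR:
  fixes A :: "real^'n^'m" and B :: "real^'p^'n"
  shows "(a *\<^sub>R A) ** B = a *\<^sub>R (A ** B)" and "A ** (a *\<^sub>R B) = a *\<^sub>R (A ** B)"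
  by (simp_all add: matrix_scalar_ac scalar_matrix_assoc[symmetric])

lemma matpow_scaleR: "matpow (c *\<^sub>R A) k = c ^ k *\<^sub>R matpow A k"
  by (induction k) (simp_all add: matrix_mult_scaleR)

lemma matpow_odd_even_of_cube:
  fixes A :: "real^'n^'n"
  assumes cube: "A ** (A ** A) = (- w\<^sup>2) *\<^sub>R A"
  shows "matpow A (2 * j + 1) = (- w\<^sup>2) ^ j *\<^sub>R A \<and>
         matpow A (2 * j + 2) = (- w\<^sup>2) ^ j *\<^sub>R (A ** A)"
proof (induction j)
  case 0
  show ?case by simp
next
  case (Suc j)
  have "matpow A (2 * Suc j + 1) = A ** matpow A (2 * j + 2)"
    by (simp add: numeral_2_eq_2)
  also have "\<dots> = (- w\<^sup>2) ^ j *\<^sub>R (A ** (A ** A))"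
    using Suc.IH by (simp only: matrix_mult_scaleR)
  also have "\<dots> = (- w\<^sup>2) ^ Suc j *\<^sub>R A"
    by (simp only: cube scaleR_scaleR power_Suc mult.commute)
  finally have odd: "matpow A (2 * Suc j + 1) = (- w\<^sup>2) ^ Suc j *\<^sub>R A" .
  have "matpow A (2 * Suc j + 2) = A ** matpow A (2 * Suc j + 1)"
    by (simp add: numeral_2_eq_2)
  also have "\<dots> = (- w\<^sup>2) ^ Suc j *\<^sub>R (A ** A)"
    by (simp only: odd matrix_mult_scaleR)
  finally show ?case
    using odd by blast
qed

lemma matpow_add_orthogonal_idempotent:
  fixes A P :: "real^'n^'n"
  assumes "A ** P = 0" "P ** A = 0" "P ** P = P"
  shows "matpow (A + c *\<^sub>R P) (Suc k) = matpow A (Suc k) + c ^ Suc k *\<^sub>R P"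
proof (induction k)
  case 0
  show ?case by simp
next
  case (Suc k)
  have "P ** matpow A (Suc k) = 0"
    by (simp add: matrix_mul_assoc assms(2))
  with Suc.IH show ?case
    by (simp add: matrix_add_ldistrib matrix_add_rdistrib matrix_mult_scaleR assms(1,3))
qed

lemma matpow_term_sin_cos_coeffs:
  fixes A :: "real^'n^'n"
  assumes cube: "A ** (A ** A) = (- w\<^sup>2) *\<^sub>R A" and "w \<noteq> 0" and "k > 0"
  shows "(1 / fact k) *\<^sub>R matpow (t *\<^sub>R A) k =
           (sin_coeff k * (w * t) ^ k / w) *\<^sub>R A + (- cos_coeff k * (w * t) ^ k / w\<^sup>2) *\<^sub>R (A ** A)"
proof -
  have sign: "(- w\<^sup>2) ^ j = (-1) ^ j * w ^ (2 * j)" for j :: nat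
    by (metis power_minus power_mult)
  have "k = 2 * (k div 2) + 1 \<or> k = 2 * (k div 2 - 1) + 2"
    using \<open>k > 0\<close> by presburger
  then obtain j where "k = 2 * j + 1 \<or> k = 2 * j + 2"
    by blast
  then show ?thesis
  proof
    assume k: "k = 2 * j + 1"
    have "matpow (t *\<^sub>R A) k = (t ^ k * (- w\<^sup>2) ^ j) *\<^sub>R A"
      using matpow_odd_even_of_cube[OF cube, of j] by (simp only: k matpow_scaleR scaleR_scaleR)
    moreover have "sin_coeff k * (w * t) ^ k / w = t ^ k * (- w\<^sup>2) ^ j / fact k"
    proof -
      have "(w * t) ^ k = w * (w ^ (2 * j) * t ^ k)" and "sin_coeff k = (-1) ^ j / fact k"
        by (simp_all add: k power_mult_distrib sin_coeff_def)
      then show ?thesis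
        using \<open>w \<noteq> 0\<close> by (simp add: sign)
    qed
    moreover have "cos_coeff k = 0"
      by (simp add: k cos_coeff_def)
    ultimately show ?thesis
      by simp
  next
    assume k: "k = 2 * j + 2"
    have "matpow (t *\<^sub>R A) k = (t ^ k * (- w\<^sup>2) ^ j) *\<^sub>R (A ** A)"
      using matpow_odd_even_of_cube[OF cube, of j] by (simp only: k matpow_scaleR scaleR_scaleR)
    moreover have "- cos_coeff k * (w * t) ^ k / w\<^sup>2 = t ^ k * (- w\<^sup>2) ^ j / fact k"
    proof -
      have "(w * t) ^ k = w\<^sup>2 * (w ^ (2 * j) * t ^ k)" and "cos_coeff k = - ((-1) ^ j / fact k)"
        by (simp_all add: k power_mult_distrib power_add power2_eq_square cos_coeff_def)
      then show ?thesis
        using \<open>w \<noteq> 0\<close> by (simp add: sign)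
    qed
    moreover have "sin_coeff k = 0"
      by (simp add: k sin_coeff_def)
    ultimately show ?thesis
      by simp
  qed
qed

lemma mexp_rodrigues:
  fixes A P :: "real^'n^'n"
  assumes cube: "A ** (A ** A) = (- w\<^sup>2) *\<^sub>R A" and "w \<noteq> 0"
    and orth: "A ** P = 0" "P ** A = 0" and idem: "P ** P = P"
  shows "mexp (t *\<^sub>R A + c *\<^sub>R P) =
           mat 1 + (sin (w * t) / w) *\<^sub>R A + ((1 - cos (w * t)) / w\<^sup>2) *\<^sub>R (A ** A)
             + (exp c - 1) *\<^sub>R P"
proof -
  \<comment> \<open>the k = 0 terms of the sine and cosine series do not reproduce matpow _ 0 = mat 1\<close>
  define correction where "correction = mat 1 - P + (1 / w\<^sup>2) *\<^sub>R (A ** A)"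
  define T where "T k = (sin_coeff k * (w * t) ^ k / w) *\<^sub>R A
      + (- cos_coeff k * (w * t) ^ k / w\<^sup>2) *\<^sub>R (A ** A) + (c ^ k / fact k) *\<^sub>R P
      + (if k = 0 then correction else 0)" for k
  have term_eq: "(1 / fact k) *\<^sub>R matpow (t *\<^sub>R A + c *\<^sub>R P) k = T k" for k
  proof (cases k)
    case 0
    then show ?thesis by (simp add: T_def correction_def)
  next
    case (Suc m)
    have "(t *\<^sub>R A) ** P = 0" "P ** (t *\<^sub>R A) = 0"
      by (simp_all add: matrix_mult_scaleR orth)
    then have "matpow (t *\<^sub>R A + c *\<^sub>R P) k = matpow (t *\<^sub>R A) k + c ^ k *\<^sub>R P"
      unfolding Suc by (rule matpow_add_orthogonal_idempotent[OF _ _ idem])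
    then show ?thesis
      using matpow_term_sin_cos_coeffs[OF cube \<open>w \<noteq> 0\<close>, of k t]
      by (simp add: T_def Suc scaleR_add_right)
  qed
  have "T sums ((sin (w * t) / w) *\<^sub>R A + (- cos (w * t) / w\<^sup>2) *\<^sub>R (A ** A) + exp c *\<^sub>R P
                + correction)"
  proof -
    have "(\<lambda>k. (sin_coeff k * (w * t) ^ k / w) *\<^sub>R A) sums ((sin (w * t) / w) *\<^sub>R A)"
      using sin_converges[of "w * t"] by (intro sums_scaleR_left sums_divide) simp
    moreover have "(\<lambda>k. (- cos_coeff k * (w * t) ^ k / w\<^sup>2) *\<^sub>R (A ** A))
        sums ((- cos (w * t) / w\<^sup>2) *\<^sub>R (A ** A))"
      using sums_minus[OF cos_converges[of "w * t"]]
      by (intro sums_scaleR_left sums_divide) simp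
    moreover have "(\<lambda>k. (c ^ k / fact k) *\<^sub>R P) sums (exp c *\<^sub>R P)"
      using exp_converges[of c] by (intro sums_scaleR_left) (simp add: divide_inverse mult.commute)
    moreover have "(\<lambda>k. if k = 0 then correction else 0) sums correction"
      by (rule sums_single[of 0 "\<lambda>_. correction", simplified])
    ultimately show ?thesis
      unfolding T_def by (intro sums_add)
  qed
  moreover have "(sin (w * t) / w) *\<^sub>R A + (- cos (w * t) / w\<^sup>2) *\<^sub>R (A ** A) + exp c *\<^sub>R P
                + correction = mat 1 + (sin (w * t) / w) *\<^sub>R A
                + ((1 - cos (w * t)) / w\<^sup>2) *\<^sub>R (A ** A) + (exp c - 1) *\<^sub>R P"
    by (simp add: correction_def algebra_simps diff_divide_distrib)
  ultimately show ?thesis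
    unfolding mexp_def term_eq by (simp add: sums_iff)
qed

lemma rotation_matrix_mult:
  fixes A B :: "real^'n^'n"
  assumes "rotation_matrix A" "rotation_matrix B"
  shows "rotation_matrix (A ** B)"
  using assms by (simp add: rotation_matrix_def orthogonal_matrix_mul det_mul)

(* The cross-product matrix of (x, y, z); E1, E2, E3 are its values at the unit vectors, placed in
   the upper-left block. *)
definition skew3 :: "real \<Rightarrow> real \<Rightarrow> real \<Rightarrow> real^3^3" where
  "skew3 x y z = vector [vector [0, - z, y], vector [z, 0, - x], vector [- y, x, 0]]"

definition rodrigues :: "real \<Rightarrow> real \<Rightarrow> real \<Rightarrow> real \<Rightarrow> real \<Rightarrow> real^3^3" where
  "rodrigues x y z mu nu = mat 1 + mu *\<^sub>R skew3 x y z + nu *\<^sub>R (skew3 x y z ** skew3 x y z)"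

definition rotz :: "real \<Rightarrow> real^3^3" where
  "rotz \<theta> = vector [vector [cos \<theta>, - sin \<theta>, 0], vector [sin \<theta>, cos \<theta>, 0], vector [0, 0, 1]]"

lemma rotation_matrix_rodrigues:
  assumes "2 * nu - mu\<^sup>2 - nu\<^sup>2 * (x\<^sup>2 + y\<^sup>2 + z\<^sup>2) = 0"
  shows "rotation_matrix (rodrigues x y z mu nu)"
  using assms
  unfolding rotation_matrix_def orthogonal_matrix_def rodrigues_def skew3_def
  by (simp add: vec_eq_iff forall_3 sum_3 det_3 transpose_def matrix_matrix_mult_def mat_def)
    algebra

lemma rodrigues_coeffs_constraint:
  fixes w t :: real
  assumes "w \<noteq> 0"
  shows "2 * ((1 - cos (w * t)) / w\<^sup>2) - (sin (w * t) / w)\<^sup>2 - ((1 - cos (w * t)) / w\<^sup>2)\<^sup>2 * w\<^sup>2 = 0"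
proof -
  have "2 * ((1 - c) / w\<^sup>2) - (s / w)\<^sup>2 - ((1 - c) / w\<^sup>2)\<^sup>2 * w\<^sup>2 = 0"
    if "s\<^sup>2 + c\<^sup>2 = 1" for s c
    using that assms by (simp add: field_simps) algebra
  then show ?thesis
    by simp
qed

lemma rodrigues_z_axis: "rodrigues 0 0 1 (sin \<theta>) (1 - cos \<theta>) = rotz \<theta>"
  by (simp add: rodrigues_def skew3_def rotz_def vec_eq_iff forall_3 sum_3 matrix_matrix_mult_def mat_def)

lemma rotation_matrix_rotz: "rotation_matrix (rotz \<theta>)"
  using rotation_matrix_rodrigues[of "1 - cos \<theta>" "sin \<theta>" 0 0 1]
    rodrigues_coeffs_constraint[of 1 \<theta>]
  by (simp add: rodrigues_z_axis)

lemma rotz_add: "rotz \<alpha> ** rotz \<beta> = rotz (\<alpha> + \<beta>)"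
  by (simp add: rotz_def vec_eq_iff forall_3 sum_3 matrix_matrix_mult_def cos_add sin_add)

definition skew4 :: "real \<Rightarrow> real \<Rightarrow> real \<Rightarrow> real^4^4" where
  "skew4 x y z = x *\<^sub>R E1 + y *\<^sub>R E2 + z *\<^sub>R E3"

lemma skew4_cube:
  "skew4 x y z ** (skew4 x y z ** skew4 x y z) = (- (x\<^sup>2 + y\<^sup>2 + z\<^sup>2)) *\<^sub>R skew4 x y z"
  by (simp add: skew4_def E1_def E2_def E3_def munit_def vec_eq_iff matrix_matrix_mult_def
      forall_4 sum_4 algebra_simps power2_eq_square)

lemma skew4_E4:
  shows "skew4 x y z ** E4 = 0" and "E4 ** skew4 x y z = 0" and "E4 ** E4 = E4"
  by (simp_all add: skew4_def E1_def E2_def E3_def E4_def munit_def vec_eq_iff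
      matrix_matrix_mult_def forall_4 sum_4)

lemma pairCv_rodrigues:
  "mat 1 + mu *\<^sub>R skew4 x y z + nu *\<^sub>R (skew4 x y z ** skew4 x y z) + (exp c - 1) *\<^sub>R E4
     = pairCv (rodrigues x y z mu nu) c"
  by (simp add: skew4_def E1_def E2_def E3_def E4_def munit_def rodrigues_def skew3_def pairCv_def
      ix3_def vec_eq_iff matrix_matrix_mult_def mat_def forall_4 sum_4 sum_3 algebra_simps)

lemma mexp_skew4:
  assumes w: "w = sqrt (x\<^sup>2 + y\<^sup>2 + z\<^sup>2)" "w \<noteq> 0"
  shows "mexp (t *\<^sub>R skew4 x y z + c *\<^sub>R E4)
           = pairCv (rodrigues x y z (sin (w * t) / w) ((1 - cos (w * t)) / w\<^sup>2)) c"
proof -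
  have "skew4 x y z ** (skew4 x y z ** skew4 x y z) = (- w\<^sup>2) *\<^sub>R skew4 x y z"
    using w(1) by (simp add: skew4_cube)
  from mexp_rodrigues[OF this w(2) skew4_E4]
  show ?thesis
    by (simp only: pairCv_rodrigues)
qed

lemma mexp_E3_E4: "mexp (\<theta> *\<^sub>R E3 + c *\<^sub>R E4) = pairCv (rotz \<theta>) c"
  using mexp_skew4[of 1 0 0 1 \<theta> c] by (simp add: skew4_def rodrigues_z_axis)

lemma pairCv_mult: "pairCv A u ** pairCv B v = pairCv (A ** B) (u + v)"
  by (simp add: pairCv_def ix3_def vec_eq_iff matrix_matrix_mult_def forall_4 sum_4 sum_3 exp_add)

lemma gamma1_eq_mexp_mult:
  "gamma1 a1 a2 a3 b t
     = mexp (t *\<^sub>R skew4 a1 a3 (b - a2) + (a2 * t) *\<^sub>R E4) ** mexp ((- (b * t)) *\<^sub>R E3)"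
  by (simp add: gamma1_def skew4_def e1_def e2_def e3_def e4_def algebra_simps)

lemma gamma1_generic:
  fixes a1 a2 a3 b t w :: real
  assumes w: "w = sqrt (a1\<^sup>2 + a3\<^sup>2 + (b - a2)\<^sup>2)" and "w \<noteq> 0"
  defines "C \<equiv> rodrigues a1 a3 (b - a2) (sin (w * t) / w) ((1 - cos (w * t)) / w\<^sup>2) ** rotz (- (b * t))"
  shows "rotation_matrix C \<and> gamma1 a1 a2 a3 b t = pairCv C (a2 * t)"
proof
  have "w\<^sup>2 = a1\<^sup>2 + a3\<^sup>2 + (b - a2)\<^sup>2"
    by (simp add: w)
  then show "rotation_matrix C"
    unfolding C_def using rodrigues_coeffs_constraint[OF \<open>w \<noteq> 0\<close>]
    by (intro rotation_matrix_mult rotation_matrix_rodrigues rotation_matrix_rotz) simp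
  show "gamma1 a1 a2 a3 b t = pairCv C (a2 * t)"
    unfolding C_def using mexp_skew4[OF assms(1,2), of t "a2 * t"] mexp_E3_E4[of "- (b * t)" 0]
    by (simp add: gamma1_eq_mexp_mult pairCv_mult)
qed

lemma gamma1_vertical: "gamma1 0 a2 0 b t = pairCv (rotz (- (a2 * t))) (a2 * t)"
proof -
  have "gamma1 0 a2 0 b t
      = mexp ((t * (b - a2)) *\<^sub>R E3 + (a2 * t) *\<^sub>R E4) ** mexp ((- (b * t)) *\<^sub>R E3 + 0 *\<^sub>R E4)"
    by (simp add: gamma1_eq_mexp_mult skew4_def)
  also have "\<dots> = pairCv (rotz (t * (b - a2)) ** rotz (- (b * t))) (a2 * t + 0)"
    by (simp only: mexp_E3_E4 pairCv_mult)
  also have "\<dots> = pairCv (rotz (- (a2 * t))) (a2 * t)"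
    by (simp add: rotz_add algebra_simps)
  finally show ?thesis .
qed

lemma cols3_eq_rodrigues_rotz:
  "cols3
     (vector [(1 - nu * (a3\<^sup>2 + d\<^sup>2)) * cos \<theta> - (a1 * a3 * nu - d * mu) * sin \<theta>,
              (a1 * a3 * nu + d * mu) * cos \<theta> - (1 - nu * (a1\<^sup>2 + d\<^sup>2)) * sin \<theta>,
              (a1 * d * nu - a3 * mu) * cos \<theta> - (a3 * d * nu + a1 * mu) * sin \<theta>])
     (vector [(1 - nu * (a3\<^sup>2 + d\<^sup>2)) * sin \<theta> + (a1 * a3 * nu - d * mu) * cos \<theta>,
              (a1 * a3 * nu + d * mu) * sin \<theta> + (1 - nu * (a1\<^sup>2 + d\<^sup>2)) * cos \<theta>,
              (a1 * d * nu - a3 * mu) * sin \<theta> + (a3 * d * nu + a1 * mu) * cos \<theta>])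
     (vector [a1 * d * nu + a3 * mu, a3 * d * nu - a1 * mu, 1 - nu * (a1\<^sup>2 + a3\<^sup>2)])
   = rodrigues a1 a3 d mu nu ** rotz (- \<theta>)"
  by (simp add: cols3_def rodrigues_def skew3_def rotz_def transpose_def vec_eq_iff forall_3 sum_3
      matrix_matrix_mult_def mat_def algebra_simps power2_eq_square)

theorem theorem8:
  fixes a1 a2 a3 b t :: real
  assumes "a1\<^sup>2 + a2\<^sup>2 + a3\<^sup>2 = 1"
  shows "(a2 \<noteq> 1 \<and> a2 \<noteq> -1 \<longrightarrow>
           (let w = sqrt (1 - a2\<^sup>2 + (b - a2)\<^sup>2);
                mu = sin (w * t) / w;
                nu = (1 - cos (w * t)) / w\<^sup>2;
                d = b - a2;
                C = cols3
                  (vector [(1 - nu * (a3\<^sup>2 + d\<^sup>2)) * cos (b * t) - (a1 * a3 * nu - d * mu) * sin (b * t),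
                           (a1 * a3 * nu + d * mu) * cos (b * t) - (1 - nu * (a1\<^sup>2 + d\<^sup>2)) * sin (b * t),
                           (a1 * d * nu - a3 * mu) * cos (b * t) - (a3 * d * nu + a1 * mu) * sin (b * t)])
                  (vector [(1 - nu * (a3\<^sup>2 + d\<^sup>2)) * sin (b * t) + (a1 * a3 * nu - d * mu) * cos (b * t),
                           (a1 * a3 * nu + d * mu) * sin (b * t) + (1 - nu * (a1\<^sup>2 + d\<^sup>2)) * cos (b * t),
                           (a1 * d * nu - a3 * mu) * sin (b * t) + (a3 * d * nu + a1 * mu) * cos (b * t)])
                  (vector [a1 * d * nu + a3 * mu,
                           a3 * d * nu - a1 * mu,
                           1 - nu * (a1\<^sup>2 + a3\<^sup>2)])
            in rotation_matrix C \<and> gamma1 a1 a2 a3 b t = pairCv C (a2 * t)))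
       \<and> (a2 = 1 \<or> a2 = -1 \<longrightarrow>
           (let C = (vector [vector [cos (a2 * t), sin (a2 * t), 0],
                             vector [- sin (a2 * t), cos (a2 * t), 0],
                             vector [0, 0, 1]] :: real^3^3)
            in rotation_matrix C \<and> gamma1 a1 a2 a3 b t = pairCv C (a2 * t)))"
proof -
  have a2_sq: "1 - a2\<^sup>2 = a1\<^sup>2 + a3\<^sup>2"
    using assms by simp
  have "sqrt (a1\<^sup>2 + a3\<^sup>2 + (b - a2)\<^sup>2) \<noteq> 0" if "a2 \<noteq> 1 \<and> a2 \<noteq> -1"
  proof
    assume "sqrt (a1\<^sup>2 + a3\<^sup>2 + (b - a2)\<^sup>2) = 0"
    then have "a1\<^sup>2 + a3\<^sup>2 = 0"
      by (simp add: add_nonneg_eq_0_iff)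
    with a2_sq that show False
      by (simp add: power2_eq_1_iff)
  qed
  moreover have "a1 = 0 \<and> a3 = 0" if "a2 = 1 \<or> a2 = -1"
    using a2_sq that by (auto simp: sum_power2_eq_zero_iff)
  moreover have "vector [vector [cos (a2 * t), sin (a2 * t), 0], vector [- sin (a2 * t), cos (a2 * t), 0],
                         vector [0, 0, 1]] = rotz (- (a2 * t))"
    by (simp add: rotz_def)
  ultimately show ?thesis
    unfolding Let_def a2_sq cols3_eq_rodrigues_rotz
    using gamma1_generic[OF refl] gamma1_vertical rotation_matrix_rotz by auto
qed

end
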